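(* Let $q\in\mathbb C\setminus\{0\}$ not be a root of unity, $A=\mathbb C_q[SL(2)]$ with the canonical braiding $\Psi$ and the ribbon automorphism $\sigma=\sigma_+$. Then $HH^{\Psi,\sigma}_0(A)=0$; equivalently, the map $b_1:A\otimes A\to A$, $b_1=\mu-\mu(\sigma\otimes\mathrm{id})\Psi$, is surjective.
   Context: Fix $q^{1/2}$. $\mathbb C_q[SL(2)]$: generators $a,b,c,d$, relations $ab=qba$, $ac=qca$, $bd=qdb$, $cd=qdc$, $bc=cb$, $ad-qbc=1$, $da-q^{-1}bc=1$, matrix coproduct $\Delta\begin{pmatrix}a&b\\c&d\end{pmatrix}=\begin{pmatrix}a&b\\c&d\end{pmatrix}\otimes\begin{pmatrix}a&b\\c&d\end{pmatrix}$. Universal r-form $\mathbf r$ determined multiplicatively by $\mathbf r(a,a)=\mathbf r(d,d)=q^{1/2}$, $\mathbf r(a,d)=\mathbf r(d,a)=q^{-1/2}$, $\mathbf r(c,b)=q^{-1/2}(q-q^{-1})$, other generator values $0$. Canonical braiding: $\Psi(f\otimes g)=g_{(1)}\otimes f_{(1)}\mathbf r(f_{(2)},g_{(2)})$. $\sigma_+$ is the ribbon automorphism (invertible right comodule map with $\sigma(1)=1$, $\sigma\mu=\mu(\sigma\otimes\sigma)\Psi^2$) with $\sigma_+(g)=q^{3/2}g$ for $g\in\{a,b,c,d\}$. $HH^{\Psi,\sigma}_0(A)$ is the cokernel of $b_1$ (the degree-zero braided Hochschild homology; $A$ is unital so the cyclic and non-cyclic versions agree in degree 0). *)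

theory Defs
  imports Complex_Main "HOL-Library.Function_Algebras"
begin

text \<open>Generators t11 = a, t12 = b, t21 = c, t22 = d; matrix indices 1,2 are
  encoded as False, True.\<close>

datatype gen = Ga | Gb | Gc | Gd

type_synonym word = "gen list"
type_synonym fa = "word \<Rightarrow> complex"           \<comment> \<open>elements of the free algebra (finite support)\<close>
type_synonym tn = "word \<times> word \<Rightarrow> complex"   \<comment> \<open>elements of F \<otimes> F (finite support)\<close>

fun row :: "gen \<Rightarrow> bool" where
  "row Ga = False" | "row Gb = False" | "row Gc = True" | "row Gd = True"

fun col :: "gen \<Rightarrow> bool" where
  "col Ga = False" | "col Gb = True" | "col Gc = False" | "col Gd = True"

fun ent :: "bool \<Rightarrow> bool \<Rightarrow> gen" where
  "ent False False = Ga" | "ent False True = Gb" | "ent True False = Gc" | "ent True True = Gd"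

definition fin :: "('i \<Rightarrow> complex) \<Rightarrow> bool" where
  "fin f \<longleftrightarrow> finite {i. f i \<noteq> 0}"

definition FA :: "fa set" where
  "FA = {f. fin f}"

definition mon :: "word \<Rightarrow> fa" where
  "mon w = (\<lambda>v. if v = w then 1 else 0)"

definition one_fa :: fa where
  "one_fa = mon []"

definition smul :: "complex \<Rightarrow> ('i \<Rightarrow> complex) \<Rightarrow> ('i \<Rightarrow> complex)" where
  "smul c f = (\<lambda>i. c * f i)"

definition fmul :: "fa \<Rightarrow> fa \<Rightarrow> fa" where
  "fmul f g = (\<lambda>w. \<Sum>i\<le>length w. f (take i w) * g (drop i w))"

definition lsum :: "('i \<Rightarrow> complex) \<Rightarrow> ('i \<Rightarrow> 'j \<Rightarrow> complex) \<Rightarrow> ('j \<Rightarrow> complex)" where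
  "lsum c F = (\<lambda>j. \<Sum>i\<in>{i. c i \<noteq> 0}. c i * F i j)"

definition tens :: "fa \<Rightarrow> fa \<Rightarrow> tn" where
  "tens f g = (\<lambda>(u, v). f u * g v)"

definition KS :: "nat \<Rightarrow> bool list set" where
  "KS n = {ks. length ks = n}"

text \<open>For a word \<open>w = t_{i1 j1}\<dots>t_{in jn}\<close> and intermediate indices ks,
  \<open>\<Delta> w = \<Sum>_ks t_{i1 k1}\<dots>t_{in kn} \<otimes> t_{k1 j1}\<dots>t_{kn jn}\<close>.\<close>
definition lw :: "word \<Rightarrow> bool list \<Rightarrow> word" where
  "lw w ks = map2 (\<lambda>x k. ent (row x) k) w ks"

definition rtw :: "word \<Rightarrow> bool list \<Rightarrow> word" where
  "rtw w ks = map2 (\<lambda>x k. ent k (col x)) w ks"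

definition delta_w :: "word \<Rightarrow> tn" where
  "delta_w w = (\<lambda>p. \<Sum>ks\<in>KS (length w). if p = (lw w ks, rtw w ks) then 1 else 0)"

definition Delta :: "fa \<Rightarrow> tn" where
  "Delta f = lsum f delta_w"

definition eps_w :: "word \<Rightarrow> complex" where
  "eps_w w = prod_list (map (\<lambda>x. if row x = col x then 1 else 0) w)"

section \<open>The universal r-form (s = q^(1/2))\<close>

fun r1 :: "complex \<Rightarrow> gen \<Rightarrow> gen \<Rightarrow> complex" where
  "r1 s Ga Ga = s"
| "r1 s Gd Gd = s"
| "r1 s Ga Gd = 1 / s"
| "r1 s Gd Ga = 1 / s"
| "r1 s Gc Gb = (1 / s) * (s\<^sup>2 - 1 / s\<^sup>2)"
| "r1 s _ _ = 0"

text \<open>\<open>r(x, g h) = r(x_(1), h) r(x_(2), g)\<close>, \<open>r(x, 1) = \<epsilon>(x)\<close>.\<close>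
fun rgw :: "complex \<Rightarrow> gen \<Rightarrow> word \<Rightarrow> complex" where
  "rgw s x [] = (if row x = col x then 1 else 0)"
| "rgw s x [y] = r1 s x y"
| "rgw s x (y # z # v) = (\<Sum>k\<in>UNIV. rgw s (ent (row x) k) (z # v) * r1 s (ent k (col x)) y)"

text \<open>\<open>r(f g, h) = r(f, h_(1)) r(g, h_(2))\<close>, \<open>r(1, h) = \<epsilon>(h)\<close>.\<close>
fun rform_w :: "complex \<Rightarrow> word \<Rightarrow> word \<Rightarrow> complex" where
  "rform_w s [] w = eps_w w"
| "rform_w s (x # u) w = (\<Sum>ks\<in>KS (length w). rgw s x (lw w ks) * rform_w s u (rtw w ks))"

text \<open>\<open>\<Psi>(u \<otimes> v) = v_(1) \<otimes> u_(1) r(u_(2), v_(2))\<close>\<close>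
definition psi_w :: "complex \<Rightarrow> word \<Rightarrow> word \<Rightarrow> tn" where
  "psi_w s u v = (\<lambda>p. \<Sum>ks\<in>KS (length u). \<Sum>ls\<in>KS (length v).
      if p = (lw v ls, lw u ks) then rform_w s (rtw u ks) (rtw v ls) else 0)"

definition Psi :: "complex \<Rightarrow> tn \<Rightarrow> tn" where
  "Psi s T = lsum T (\<lambda>(u, v). psi_w s u v)"

definition mu_ss :: "(fa \<Rightarrow> fa) \<Rightarrow> tn \<Rightarrow> fa" where
  "mu_ss \<sigma> T = lsum T (\<lambda>(u, v). fmul (\<sigma> (mon u)) (\<sigma> (mon v)))"

definition mu_s1 :: "(fa \<Rightarrow> fa) \<Rightarrow> tn \<Rightarrow> fa" where
  "mu_s1 \<sigma> T = lsum T (\<lambda>(u, v). fmul (\<sigma> (mon u)) (mon v))"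

definition sig_tens :: "(fa \<Rightarrow> fa) \<Rightarrow> tn \<Rightarrow> tn" where
  "sig_tens \<sigma> T = lsum T (\<lambda>(u, v). tens (\<sigma> (mon u)) (mon v))"

section \<open>C_q[SL(2)] as the quotient of the free algebra by the ideal Iq\<close>

definition rels :: "complex \<Rightarrow> fa set" where
  "rels s = (let q = s\<^sup>2 in
    { mon [Ga, Gb] - smul q (mon [Gb, Ga]),
      mon [Ga, Gc] - smul q (mon [Gc, Ga]),
      mon [Gb, Gd] - smul q (mon [Gd, Gb]),
      mon [Gc, Gd] - smul q (mon [Gd, Gc]),
      mon [Gb, Gc] - mon [Gc, Gb],
      mon [Ga, Gd] - smul q (mon [Gb, Gc]) - one_fa,
      mon [Gd, Ga] - smul (1 / q) (mon [Gb, Gc]) - one_fa })"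

inductive_set Iq :: "complex \<Rightarrow> fa set" for s :: complex where
  Iq_zero: "0 \<in> Iq s"
| Iq_add: "x \<in> Iq s \<Longrightarrow> y \<in> Iq s \<Longrightarrow> x + y \<in> Iq s"
| Iq_smul: "x \<in> Iq s \<Longrightarrow> smul c x \<in> Iq s"
| Iq_gen: "r \<in> rels s \<Longrightarrow> fmul (mon u) (fmul r (mon v)) \<in> Iq s"

text \<open>Kernel of F\<otimes>F \<rightarrow> A\<otimes>A: span of I\<otimes>F + F\<otimes>I.\<close>
inductive_set Jq :: "complex \<Rightarrow> tn set" for s :: complex where
  Jq_zero: "0 \<in> Jq s"
| Jq_add: "x \<in> Jq s \<Longrightarrow> y \<in> Jq s \<Longrightarrow> x + y \<in> Jq s"
| Jq_smul: "x \<in> Jq s \<Longrightarrow> smul c x \<in> Jq s"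
| Jq_left: "i \<in> Iq s \<Longrightarrow> tens i (mon v) \<in> Jq s"
| Jq_right: "i \<in> Iq s \<Longrightarrow> tens (mon u) i \<in> Jq s"

section \<open>The ribbon automorphism sigma_+ (as a map on representatives, modulo Iq)\<close>

definition is_ribbon_plus :: "complex \<Rightarrow> (fa \<Rightarrow> fa) \<Rightarrow> bool" where
  "is_ribbon_plus s \<sigma> \<longleftrightarrow>
     (\<forall>f\<in>FA. \<sigma> f \<in> FA)
   \<and> (\<forall>f\<in>FA. \<forall>g\<in>FA. f - g \<in> Iq s \<longrightarrow> \<sigma> f - \<sigma> g \<in> Iq s)
   \<and> (\<forall>f\<in>FA. \<forall>g\<in>FA. \<sigma> (f + g) - (\<sigma> f + \<sigma> g) \<in> Iq s)
   \<and> (\<forall>c. \<forall>f\<in>FA. \<sigma> (smul c f) - smul c (\<sigma> f) \<in> Iq s)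
   \<and> (\<sigma> one_fa - one_fa \<in> Iq s)
   \<and> (\<forall>x. \<sigma> (mon [x]) - smul (s ^ 3) (mon [x]) \<in> Iq s)
   \<and> (\<forall>f\<in>FA. \<forall>g\<in>FA. \<sigma> (fmul f g) - mu_ss \<sigma> (Psi s (Psi s (tens f g))) \<in> Iq s)
   \<and> (\<forall>f\<in>FA. Delta (\<sigma> f) - sig_tens \<sigma> (Delta f) \<in> Jq s)
   \<and> (\<exists>\<tau>. (\<forall>f\<in>FA. \<tau> f \<in> FA)
        \<and> (\<forall>f\<in>FA. \<forall>g\<in>FA. f - g \<in> Iq s \<longrightarrow> \<tau> f - \<tau> g \<in> Iq s)
        \<and> (\<forall>f\<in>FA. \<sigma> (\<tau> f) - f \<in> Iq s \<and> \<tau> (\<sigma> f) - f \<in> Iq s))"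

definition b1 :: "complex \<Rightarrow> (fa \<Rightarrow> fa) \<Rightarrow> fa \<Rightarrow> fa \<Rightarrow> fa" where
  "b1 s \<sigma> f g = fmul f g - mu_s1 \<sigma> (Psi s (tens f g))"

end

theory Submission
  imports Defs
begin

text \<open>
  Modulo the relations, the monomials \<open>a\<^sup>i b\<^sup>j c\<^sup>k\<close> and \<open>d\<^sup>i b\<^sup>j c\<^sup>k\<close> span \<open>A\<close>, so it suffices
  to show that each of them lies in the image of \<open>b\<^sub>1\<close>. Write \<open>s = q\<^sup>1\<^sup>/\<^sup>2\<close>. For a word \<open>w\<close>
  and a generator \<open>x\<close> one has \<open>b\<^sub>1(w \<otimes> x) = w x - s\<^sup>3 x_(1) w_(1) r(w_(2), x_(2))\<close> in \<open>A\<close>,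
  because \<open>\<sigma>\<^sub>+\<close> only meets the single generator \<open>x_(1)\<close>. On PBW words the r-form is
  explicit (only \<open>r(c, b)\<close> mixes the matrix entries), so appending \<open>a\<close> to \<open>a\<^sup>i b\<^sup>j c\<^sup>k\<close>, or
  \<open>b\<close>, \<open>c\<close>, \<open>d\<close> to \<open>d\<^sup>i b\<^sup>j c\<^sup>k\<close>, and reordering with the commutation relations gives a
  nonzero multiple of \<open>(1 - s\<^sup>N) m\<close> for the next PBW monomial \<open>m\<close> and some \<open>N > 0\<close>, plus a
  multiple of a PBW monomial that is already known to lie in the image. Since \<open>q\<close> is not a root
  of unity, \<open>1 - s\<^sup>N \<noteq> 0\<close>, and an induction on the exponents, starting from \<open>b c\<close> and \<open>1\<close>,
  reaches every PBW monomial.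
\<close>

lemma sum_apply: "(sum f A) x = (\<Sum>a\<in>A. f a x)"
  by (induction A rule: infinite_finite_induct) auto

lemma fmul_mon_left_apply:
  "fmul (mon u) g w = (if \<exists>w'. w = u @ w' then g (drop (length u) w) else 0)"
proof -
  have "fmul (mon u) g w = (\<Sum>i\<le>length w. if i = length u then (if take i w = u then g (drop i w) else 0) else 0)"
    unfolding fmul_def by (rule sum.cong) (auto simp: mon_def)
  also have "\<dots> = (if take (length u) w = u then g (drop (length u) w) else 0)"
    by (auto dest: arg_cong[of _ _ length])
  finally show ?thesis
    by (metis append_eq_conv_conj append_take_drop_id)
qed

lemma fmul_mon_right_apply:
  "fmul f (mon v) w = (if \<exists>w'. w = w' @ v then f (take (length w - length v) w) else 0)"
proof -
  have "fmul f (mon v) w = (\<Sum>i\<le>length w. if i = length w - length v then (if drop i w = v then f (take i w) else 0) else 0)"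
    unfolding fmul_def by (rule sum.cong) (auto simp: mon_def)
  also have "\<dots> = (if drop (length w - length v) w = v then f (take (length w - length v) w) else 0)"
    by auto
  moreover have "drop (length w - length v) w = v \<longleftrightarrow> (\<exists>w'. w = w' @ v)"
  proof
    assume "drop (length w - length v) w = v"
    then show "\<exists>w'. w = w' @ v"
      by (metis append_take_drop_id)
  qed auto
  ultimately show ?thesis
    by simp
qed

lemma fmul_mon_mon: "fmul (mon u) (mon v) = mon (u @ v)"
  by (rule ext) (simp add: fmul_mon_left_apply, auto simp: mon_def)

lemma fmul_mon_Nil_left: "fmul (mon []) f = f"
  by (simp add: fmul_mon_left_apply fun_eq_iff)

lemma fmul_mon_left_assoc: "fmul (mon u) (fmul (mon v) g) = fmul (mon (u @ v)) g"
  by (rule ext) (auto simp: fmul_mon_left_apply)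

lemma fmul_mon_right_assoc: "fmul (fmul f (mon u)) (mon v) = fmul f (mon (u @ v))"
  by (rule ext) (auto simp: fmul_mon_right_apply)

lemma fmul_mon_middle_assoc: "fmul (fmul (mon u) g) (mon v) = fmul (mon u) (fmul g (mon v))"
proof
  fix w
  show "fmul (fmul (mon u) g) (mon v) w = fmul (mon u) (fmul g (mon v)) w"
  proof (cases "\<exists>x. w = u @ x @ v")
    case True
    then show ?thesis by (auto simp: fmul_mon_right_apply fmul_mon_left_apply)
  next
    case False
    have "fmul (fmul (mon u) g) (mon v) w = 0"
      using False by (auto simp: fmul_mon_right_apply fmul_mon_left_apply)
    moreover have "fmul (mon u) (fmul g (mon v)) w = 0"
      using False by (auto simp: fmul_mon_right_apply fmul_mon_left_apply)
    ultimately show ?thesis by simp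
  qed
qed

lemma fmul_add_left: "fmul (f + g) h = fmul f h + fmul g h"
  by (simp add: fmul_def fun_eq_iff sum.distrib algebra_simps)

lemma fmul_add_right: "fmul h (f + g) = fmul h f + fmul h g"
  by (simp add: fmul_def fun_eq_iff sum.distrib algebra_simps)

lemma fmul_diff_left: "fmul (f - g) h = fmul f h - fmul g h"
  by (simp add: fmul_def fun_eq_iff sum_subtractf algebra_simps)

lemma fmul_diff_right: "fmul h (f - g) = fmul h f - fmul h g"
  by (simp add: fmul_def fun_eq_iff sum_subtractf algebra_simps)

lemma fmul_smul_left: "fmul (smul c f) h = smul c (fmul f h)"
  by (simp add: fmul_def fun_eq_iff smul_def sum_distrib_left algebra_simps)

lemma fmul_smul_right: "fmul h (smul c f) = smul c (fmul h f)"
  by (simp add: fmul_def fun_eq_iff smul_def sum_distrib_left algebra_simps)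

lemma fmul_zero_right: "fmul h 0 = 0"
  by (simp add: fmul_def fun_eq_iff)

lemma smul_diff: "smul c (f - g) = smul c f - smul c g"
  by (simp add: smul_def fun_eq_iff algebra_simps)

lemma smul_smul: "smul c (smul d f) = smul (c * d) f"
  by (simp add: smul_def fun_eq_iff)

lemma smul_one [simp]: "smul 1 f = f"
  by (simp add: smul_def fun_eq_iff)

lemma smul_zero [simp]: "smul c 0 = 0" "smul c (\<lambda>_. 0) = (\<lambda>_. 0)"
  by (simp_all add: smul_def fun_eq_iff)

lemma smul_zero_left [simp]: "smul 0 f = 0"
  by (simp add: smul_def fun_eq_iff)

lemma smul_minus_one: "smul (-1) f = - f"
  by (simp add: smul_def fun_eq_iff)

lemma mon_in_FA: "mon w \<in> FA"
proof -
  have "{v. mon w v \<noteq> 0} = {w}" by (auto simp: mon_def)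
  then show ?thesis by (simp add: FA_def fin_def)
qed

lemma smul_in_FA: "f \<in> FA \<Longrightarrow> smul c f \<in> FA"
  unfolding FA_def fin_def smul_def by (auto elim: rev_finite_subset)

lemma FA_mon_expansion:
  assumes "h \<in> FA"
  shows "h = (\<Sum>w\<in>{w. h w \<noteq> 0}. smul (h w) (mon w))"
proof
  fix v
  have "(\<Sum>w\<in>{w. h w \<noteq> 0}. smul (h w) (mon w)) v = (\<Sum>w\<in>{w. h w \<noteq> 0}. if w = v then h w else 0)"
    unfolding sum_apply by (rule sum.cong) (auto simp: smul_def mon_def)
  also have "\<dots> = h v"
    using assms by (simp add: FA_def fin_def)
  finally show "h v = (\<Sum>w\<in>{w. h w \<noteq> 0}. smul (h w) (mon w)) v" by simp
qed

section \<open>The ideal of relations\<close>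

lemma Iq_uminus: "x \<in> Iq s \<Longrightarrow> - x \<in> Iq s"
  using Iq_smul[of x s "-1"] by (simp only: smul_minus_one)

lemma Iq_diff: "x \<in> Iq s \<Longrightarrow> y \<in> Iq s \<Longrightarrow> x - y \<in> Iq s"
  unfolding diff_conv_add_uminus by (intro Iq_add Iq_uminus)

lemma Iq_sum: "(\<And>k. k \<in> K \<Longrightarrow> f k \<in> Iq s) \<Longrightarrow> sum f K \<in> Iq s"
  by (induction K rule: infinite_finite_induct) (auto intro: Iq.intros)

lemma Iq_fmul_mon_left: "x \<in> Iq s \<Longrightarrow> fmul (mon u) x \<in> Iq s"
proof (induction x rule: Iq.induct)
  case Iq_zero
  then show ?case using Iq.Iq_zero by (simp add: fmul_def zero_fun_def)
next
  case (Iq_add x y)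
  then show ?case by (metis fmul_add_right Iq.Iq_add)
next
  case (Iq_smul x c)
  then show ?case by (simp add: fmul_smul_right Iq.Iq_smul)
next
  case (Iq_gen r u' v)
  then show ?case by (simp add: fmul_mon_left_assoc Iq.Iq_gen)
qed

lemma Iq_fmul_mon_right: "x \<in> Iq s \<Longrightarrow> fmul x (mon v) \<in> Iq s"
proof (induction x rule: Iq.induct)
  case Iq_zero
  then show ?case using Iq.Iq_zero by (simp add: fmul_def zero_fun_def)
next
  case (Iq_add x y)
  then show ?case by (metis fmul_add_left Iq.Iq_add)
next
  case (Iq_smul x c)
  then show ?case by (simp add: fmul_smul_left Iq.Iq_smul)
next
  case (Iq_gen r u v')
  then show ?case by (simp add: fmul_mon_middle_assoc fmul_mon_right_assoc Iq.Iq_gen)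
qed

definition cong_Iq :: "complex \<Rightarrow> fa \<Rightarrow> fa \<Rightarrow> bool" where
  "cong_Iq s f g \<longleftrightarrow> f - g \<in> Iq s"

lemma cong_Iq_refl: "cong_Iq s f f"
  by (simp add: cong_Iq_def Iq.Iq_zero)

lemma cong_Iq_sym: "cong_Iq s f g \<Longrightarrow> cong_Iq s g f"
  unfolding cong_Iq_def using Iq_uminus[of "f - g" s] by simp

lemma cong_Iq_trans: "cong_Iq s f g \<Longrightarrow> cong_Iq s g h \<Longrightarrow> cong_Iq s f h"
  unfolding cong_Iq_def using Iq_add[of "f - g" s "g - h"] by simp

lemma cong_Iq_add: "cong_Iq s f g \<Longrightarrow> cong_Iq s f' g' \<Longrightarrow> cong_Iq s (f + f') (g + g')"
  unfolding cong_Iq_def using Iq_add[of "f - g" s "f' - g'"] by (simp add: algebra_simps)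

lemma cong_Iq_diff: "cong_Iq s f g \<Longrightarrow> cong_Iq s f' g' \<Longrightarrow> cong_Iq s (f - f') (g - g')"
  unfolding cong_Iq_def using Iq_diff[of "f - g" s "f' - g'"] by (simp add: algebra_simps)

lemma cong_Iq_smul: "cong_Iq s f g \<Longrightarrow> cong_Iq s (smul c f) (smul c g)"
  unfolding cong_Iq_def by (simp add: smul_diff[symmetric] Iq_smul)

lemma cong_Iq_smul_trans:
  "cong_Iq s f (smul c g) \<Longrightarrow> cong_Iq s g (smul d h) \<Longrightarrow> cong_Iq s f (smul (c * d) h)"
  using cong_Iq_trans cong_Iq_smul by (fastforce simp: smul_smul)

lemma cong_Iq_fmul_mon_left: "cong_Iq s f g \<Longrightarrow> cong_Iq s (fmul (mon u) f) (fmul (mon u) g)"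
  unfolding cong_Iq_def by (simp add: fmul_diff_right[symmetric] Iq_fmul_mon_left)

lemma cong_Iq_fmul_mon_right: "cong_Iq s f g \<Longrightarrow> cong_Iq s (fmul f (mon v)) (fmul g (mon v))"
  unfolding cong_Iq_def by (simp add: fmul_diff_left[symmetric] Iq_fmul_mon_right)

lemma cong_Iq_lincomb_diff:
  assumes "cong_Iq s a (smul c1 m + smul d1 X)" and "cong_Iq s b (smul c2 m + smul d2 X)"
  shows "cong_Iq s (a - smul c b) (smul (c1 - c * c2) m + smul (d1 - c * d2) X)"
proof -
  have "cong_Iq s (a - smul c b) (smul c1 m + smul d1 X - smul c (smul c2 m + smul d2 X))"
    using assms by (intro cong_Iq_diff cong_Iq_smul)
  moreover have "smul c1 m + smul d1 X - smul c (smul c2 m + smul d2 X)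
               = smul (c1 - c * c2) m + smul (d1 - c * d2) X"
    by (simp add: smul_def fun_eq_iff algebra_simps)
  ultimately show ?thesis by simp
qed

definition qcommute :: "complex \<Rightarrow> gen \<Rightarrow> gen \<Rightarrow> complex \<Rightarrow> bool" where
  "qcommute s x y c \<longleftrightarrow> (\<forall>u v. cong_Iq s (mon (u @ [x, y] @ v)) (smul c (mon (u @ [y, x] @ v))))"

lemma qcommute_of_rel:
  assumes "mon [x, y] - smul c (mon [y, x]) \<in> rels s"
  shows "qcommute s x y c"
  unfolding qcommute_def cong_Iq_def
proof (intro allI)
  fix u v
  have "fmul (mon u) (fmul (mon [x, y] - smul c (mon [y, x])) (mon v)) \<in> Iq s"
    using assms by (rule Iq_gen)
  then show "mon (u @ [x, y] @ v) - smul c (mon (u @ [y, x] @ v)) \<in> Iq s"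
    by (simp add: fmul_diff_left fmul_diff_right fmul_smul_left fmul_smul_right fmul_mon_mon)
qed

lemma qcommute_ab: "qcommute s Ga Gb (s\<^sup>2)"
  and qcommute_ac: "qcommute s Ga Gc (s\<^sup>2)"
  and qcommute_bd: "qcommute s Gb Gd (s\<^sup>2)"
  and qcommute_cd: "qcommute s Gc Gd (s\<^sup>2)"
  and qcommute_bc: "qcommute s Gb Gc 1"
  by (rule qcommute_of_rel; simp add: rels_def Let_def)+

lemma qcommute_swap:
  assumes "qcommute s x y c" and "c \<noteq> 0"
  shows "qcommute s y x (1 / c)"
  unfolding qcommute_def
proof (intro allI)
  fix u v
  have "cong_Iq s (smul (1 / c) (mon (u @ [x, y] @ v))) (smul (1 / c) (smul c (mon (u @ [y, x] @ v))))"
    using assms(1) unfolding qcommute_def by (blast intro: cong_Iq_smul)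
  then show "cong_Iq s (mon (u @ [y, x] @ v)) (smul (1 / c) (mon (u @ [x, y] @ v)))"
    using assms(2) by (simp add: smul_smul cong_Iq_sym)
qed

lemma qcommute_cb: "qcommute s Gc Gb 1"
  using qcommute_swap[OF qcommute_bc] by simp

lemma qcommute_ba: "s \<noteq> 0 \<Longrightarrow> qcommute s Gb Ga (1 / s\<^sup>2)"
  and qcommute_ca: "s \<noteq> 0 \<Longrightarrow> qcommute s Gc Ga (1 / s\<^sup>2)"
  by (simp_all add: qcommute_swap qcommute_ab qcommute_ac)

lemma qcommute_replicate_left:
  assumes "qcommute s x y c"
  shows "cong_Iq s (mon (u @ replicate n x @ [y] @ v)) (smul (c ^ n) (mon (u @ [y] @ replicate n x @ v)))"
proof (induction n arbitrary: u)
  case 0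
  then show ?case by (simp add: cong_Iq_refl)
next
  case (Suc n)
  have "cong_Iq s (mon (u @ replicate (Suc n) x @ [y] @ v)) (smul (c ^ n) (mon (u @ [x, y] @ replicate n x @ v)))"
    using Suc[of "u @ [x]"] by simp
  moreover have "cong_Iq s (mon (u @ [x, y] @ replicate n x @ v)) (smul c (mon (u @ [y] @ replicate (Suc n) x @ v)))"
    using assms unfolding qcommute_def by (metis append_Cons append_Nil replicate_Suc)
  ultimately show ?case
    by (metis cong_Iq_smul_trans power_Suc2)
qed

lemma qcommute_replicate_right:
  assumes "qcommute s x y c"
  shows "cong_Iq s (mon (u @ [x] @ replicate n y @ v)) (smul (c ^ n) (mon (u @ replicate n y @ [x] @ v)))"
proof (induction n arbitrary: u)
  case 0
  then show ?case by (simp add: cong_Iq_refl)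
next
  case (Suc n)
  have "cong_Iq s (mon (u @ [x, y] @ replicate n y @ v)) (smul c (mon ((u @ [y]) @ [x] @ replicate n y @ v)))"
    using assms unfolding qcommute_def by simp
  moreover have "cong_Iq s (mon ((u @ [y]) @ [x] @ replicate n y @ v)) (smul (c ^ n) (mon (u @ replicate (Suc n) y @ [x] @ v)))"
    using Suc[of "u @ [y]"] by (simp add: replicate_app_Cons_same)
  ultimately show ?case
    by (simp add: cong_Iq_smul_trans)
qed

lemma cong_Iq_of_unit_rel:
  assumes "mon [x, y] - smul c (mon [Gb, Gc]) - one_fa \<in> rels s"
  shows "cong_Iq s (mon (u @ [x, y] @ v)) (smul c (mon (u @ [Gb, Gc] @ v)) + mon (u @ v))"
proof -
  have "fmul (mon u) (fmul (mon [x, y] - smul c (mon [Gb, Gc]) - one_fa) (mon v)) \<in> Iq s"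
    using assms by (rule Iq_gen)
  then show ?thesis
    unfolding cong_Iq_def
    by (simp add: fmul_diff_left fmul_diff_right fmul_smul_left fmul_smul_right fmul_mon_mon
        fmul_add_left fmul_add_right one_fa_def diff_diff_eq)
qed

lemma ad_relation: "cong_Iq s (mon (u @ [Ga, Gd] @ v)) (smul (s\<^sup>2) (mon (u @ [Gb, Gc] @ v)) + mon (u @ v))"
  and da_relation: "cong_Iq s (mon (u @ [Gd, Ga] @ v)) (smul (1 / s\<^sup>2) (mon (u @ [Gb, Gc] @ v)) + mon (u @ v))"
  by (rule cong_Iq_of_unit_rel; simp add: rels_def Let_def)+

section \<open>PBW monomials span the quotient\<close>

definition pbw_word :: "gen \<Rightarrow> nat \<Rightarrow> nat \<Rightarrow> nat \<Rightarrow> word" where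
  "pbw_word x i j k = replicate i x @ replicate j Gb @ replicate k Gc"

inductive_set pbw_span :: "complex \<Rightarrow> fa set" for s :: complex where
  pbw_span_mon: "x \<in> {Ga, Gd} \<Longrightarrow> mon (pbw_word x i j k) \<in> pbw_span s"
| pbw_span_add: "f \<in> pbw_span s \<Longrightarrow> g \<in> pbw_span s \<Longrightarrow> f + g \<in> pbw_span s"
| pbw_span_smul: "f \<in> pbw_span s \<Longrightarrow> smul c f \<in> pbw_span s"
| pbw_span_cong: "f \<in> pbw_span s \<Longrightarrow> cong_Iq s g f \<Longrightarrow> g \<in> pbw_span s"

lemma pbw_span_cong_smul: "cong_Iq s f (smul c g) \<Longrightarrow> g \<in> pbw_span s \<Longrightarrow> f \<in> pbw_span s"
  by (meson pbw_span_cong pbw_span_smul)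

lemma pbw_word_snoc_c: "pbw_word x i j k @ [Gc] = pbw_word x i j (Suc k)"
  by (simp add: pbw_word_def replicate_append_same)

lemma pbw_word_snoc_b: "cong_Iq s (mon (pbw_word x i j k @ [Gb])) (mon (pbw_word x i (Suc j) k))"
proof -
  have "cong_Iq s (mon ((replicate i x @ replicate j Gb) @ replicate k Gc @ [Gb] @ []))
          (smul (1 ^ k) (mon ((replicate i x @ replicate j Gb) @ [Gb] @ replicate k Gc @ [])))"
    by (rule qcommute_replicate_left[OF qcommute_cb])
  then show ?thesis
    by (simp add: pbw_word_def replicate_app_Cons_same)
qed

lemma cong_Iq_move_past_bc:
  assumes "qcommute s Gb y cb" and "qcommute s Gc y cc"
  shows "cong_Iq s (mon (u @ replicate j Gb @ replicate k Gc @ [y]))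
           (smul (cc ^ k * cb ^ j) (mon (u @ [y] @ replicate j Gb @ replicate k Gc)))"
proof -
  have "cong_Iq s (mon ((u @ replicate j Gb) @ replicate k Gc @ [y] @ []))
          (smul (cc ^ k) (mon ((u @ replicate j Gb) @ [y] @ replicate k Gc @ [])))"
    by (rule qcommute_replicate_left[OF assms(2)])
  moreover have "cong_Iq s (mon (u @ replicate j Gb @ [y] @ replicate k Gc))
          (smul (cb ^ j) (mon (u @ [y] @ replicate j Gb @ replicate k Gc)))"
    by (rule qcommute_replicate_left[OF assms(1)])
  ultimately show ?thesis
    by (simp add: cong_Iq_smul_trans)
qed

lemma bc_qcommute_with_ad:
  assumes "s \<noteq> 0" and "y \<in> {Ga, Gd}"
  obtains cb cc where "qcommute s Gb y cb" and "qcommute s Gc y cc"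
  using assms qcommute_ba qcommute_ca qcommute_bd qcommute_cd by blast

lemma ad_unit_relation:
  assumes "x \<in> {Ga, Gd}" and "y \<in> {Ga, Gd}" and "x \<noteq> y"
  obtains c where "\<And>u v. cong_Iq s (mon (u @ [x, y] @ v)) (smul c (mon (u @ [Gb, Gc] @ v)) + mon (u @ v))"
  using assms ad_relation da_relation by blast

lemma pbw_span_ad_cross:
  assumes rel: "\<And>u v. cong_Iq s (mon (u @ [x, y] @ v)) (smul c (mon (u @ [Gb, Gc] @ v)) + mon (u @ v))"
    and x: "x \<in> {Ga, Gd}" and y: "y \<in> {Ga, Gd}"
  shows "mon (replicate i x @ [y] @ replicate j Gb @ replicate k Gc) \<in> pbw_span s"
proof (cases i)
  case 0
  then show ?thesis
    using pbw_span_mon[OF y, of 1 j k] by (simp add: pbw_word_def)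
next
  case (Suc i')
  let ?bc = "replicate j Gb @ replicate k Gc"
  have "cong_Iq s (mon ((replicate i' x @ [Gb]) @ [Gc] @ replicate j Gb @ replicate k Gc))
          (smul (1 ^ j) (mon ((replicate i' x @ [Gb]) @ replicate j Gb @ [Gc] @ replicate k Gc)))"
    by (rule qcommute_replicate_right[OF qcommute_cb])
  then have "cong_Iq s (mon (replicate i' x @ [Gb, Gc] @ ?bc)) (mon (pbw_word x i' (Suc j) (Suc k)))"
    by (simp add: pbw_word_def)
  then have "mon (replicate i' x @ [Gb, Gc] @ ?bc) \<in> pbw_span s"
    using pbw_span_cong pbw_span_mon[OF x] by blast
  moreover have "mon (replicate i' x @ ?bc) \<in> pbw_span s"
    using pbw_span_mon[OF x] by (simp add: pbw_word_def)
  moreover have "replicate i x @ [y] @ ?bc = replicate i' x @ [x, y] @ ?bc"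
    using Suc by (simp add: replicate_app_Cons_same)
  ultimately show ?thesis
    using rel by (metis pbw_span_add pbw_span_cong pbw_span_smul)
qed

lemma pbw_word_snoc_in_span:
  assumes "s \<noteq> 0" and x: "x \<in> {Ga, Gd}"
  shows "mon (pbw_word x i j k @ [g]) \<in> pbw_span s"
proof (cases "g \<in> {Ga, Gd}")
  case True
  obtain cb cc where "qcommute s Gb g cb" "qcommute s Gc g cc"
    using bc_qcommute_with_ad[OF assms(1) True] .
  then have move: "cong_Iq s (mon (pbw_word x i j k @ [g]))
      (smul (cc ^ k * cb ^ j) (mon (replicate i x @ [g] @ replicate j Gb @ replicate k Gc)))"
    using cong_Iq_move_past_bc by (simp add: pbw_word_def)
  have "mon (replicate i x @ [g] @ replicate j Gb @ replicate k Gc) \<in> pbw_span s"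
  proof (cases "g = x")
    case True
    then show ?thesis
      using pbw_span_mon[OF x, of "Suc i" j k]
      by (simp add: pbw_word_def replicate_append_same[symmetric])
  next
    case False
    then obtain c where "\<And>u v. cong_Iq s (mon (u @ [x, g] @ v)) (smul c (mon (u @ [Gb, Gc] @ v)) + mon (u @ v))"
      using ad_unit_relation x \<open>g \<in> {Ga, Gd}\<close> by metis
    then show ?thesis
      using pbw_span_ad_cross x \<open>g \<in> {Ga, Gd}\<close> by blast
  qed
  then show ?thesis
    using move pbw_span_cong_smul by blast
next
  case False
  then consider "g = Gb" | "g = Gc"
    by (cases g) auto
  then show ?thesis
  proof cases
    case 1
    then show ?thesis
      using pbw_word_snoc_b pbw_span_cong pbw_span_mon[OF x] by blast
  next
    case 2
    then show ?thesis
      using pbw_span_mon[OF x] by (simp add: pbw_word_snoc_c)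
  qed
qed

lemma pbw_span_fmul_gen:
  assumes "s \<noteq> 0" and "f \<in> pbw_span s"
  shows "fmul f (mon [g]) \<in> pbw_span s"
  using assms(2)
proof (induction f rule: pbw_span.induct)
  case (pbw_span_mon x i j k)
  then show ?case using pbw_word_snoc_in_span[OF assms(1)] by (simp add: fmul_mon_mon)
next
  case (pbw_span_add f1 f2)
  then show ?case by (metis fmul_add_left pbw_span.pbw_span_add)
next
  case (pbw_span_smul f c)
  then show ?case by (simp add: fmul_smul_left pbw_span.pbw_span_smul)
next
  case (pbw_span_cong f1 f2)
  then show ?case using cong_Iq_fmul_mon_right pbw_span.pbw_span_cong by blast
qed

lemma mon_in_pbw_span:
  assumes "s \<noteq> 0"
  shows "mon w \<in> pbw_span s"
proof (induction w rule: rev_induct)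
  case Nil
  then show ?case using pbw_span_mon[where x = Ga and i = 0 and j = 0 and k = 0] by (simp add: pbw_word_def)
next
  case (snoc g w)
  then show ?case using pbw_span_fmul_gen[OF assms snoc] by (simp add: fmul_mon_mon)
qed

lemma Cons_b_pbw_word_d:
  "cong_Iq s (mon (Gb # pbw_word Gd i j k)) (smul ((s\<^sup>2) ^ i) (mon (pbw_word Gd i (Suc j) k)))"
  using qcommute_replicate_right[OF qcommute_bd, where u = "[]" and n = i and v = "replicate j Gb @ replicate k Gc"]
  by (simp add: pbw_word_def)

lemma Cons_c_pbw_word_d:
  "cong_Iq s (mon (Gc # pbw_word Gd i 0 k)) (smul ((s\<^sup>2) ^ i) (mon (pbw_word Gd i 0 (Suc k))))"
  using qcommute_replicate_right[OF qcommute_cd, where u = "[]" and n = i and v = "replicate k Gc"]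
  by (simp add: pbw_word_def)

lemma reorder_a_d_b_d_c:
  "cong_Iq s (mon (Ga # replicate i Gd @ replicate j Gb @ Gd # replicate k Gc))
     (smul ((s\<^sup>2) ^ j * (s\<^sup>2 * ((s\<^sup>2) ^ i * (s\<^sup>2) ^ i))) (mon (pbw_word Gd i (Suc j) (Suc k)))
      + smul ((s\<^sup>2) ^ j) (mon (pbw_word Gd i j k)))"
proof -
  let ?R = "replicate j Gb @ replicate k Gc"
  have bd: "cong_Iq s (mon (Ga # replicate i Gd @ replicate j Gb @ Gd # replicate k Gc))
          (smul ((s\<^sup>2) ^ j) (mon ([Ga, Gd] @ replicate i Gd @ ?R)))"
    using qcommute_replicate_left[OF qcommute_bd, where u = "Ga # replicate i Gd" and n = j and v = "replicate k Gc"]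
    by (simp add: replicate_app_Cons_same)
  have ad: "cong_Iq s (mon ([Ga, Gd] @ replicate i Gd @ ?R))
          (smul (s\<^sup>2) (mon ([Gb, Gc] @ replicate i Gd @ ?R)) + mon (pbw_word Gd i j k))"
    using ad_relation[of s "[]" "replicate i Gd @ ?R"] by (simp add: pbw_word_def)
  have bc_d: "cong_Iq s (mon ([Gb, Gc] @ replicate i Gd @ ?R))
          (smul ((s\<^sup>2) ^ i * (s\<^sup>2) ^ i) (mon (pbw_word Gd i (Suc j) (Suc k))))"
  proof -
    have bc: "cong_Iq s (mon ([Gb] @ [Gc] @ replicate i Gd @ ?R))
        (smul ((s\<^sup>2) ^ i) (mon ([Gb] @ replicate i Gd @ [Gc] @ ?R)))"
      by (rule qcommute_replicate_right[OF qcommute_cd])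
    have bd: "cong_Iq s (mon ([Gb] @ replicate i Gd @ [Gc] @ ?R))
        (smul ((s\<^sup>2) ^ i) (mon ((replicate i Gd @ [Gb]) @ [Gc] @ ?R)))"
      using qcommute_replicate_right[OF qcommute_bd, where u = "[]" and n = i and v = "[Gc] @ ?R"] by simp
    have cb: "cong_Iq s (mon ((replicate i Gd @ [Gb]) @ [Gc] @ ?R))
        (smul (1 ^ j) (mon ((replicate i Gd @ [Gb]) @ replicate j Gb @ [Gc] @ replicate k Gc)))"
      by (rule qcommute_replicate_right[OF qcommute_cb])
    show ?thesis
      using cong_Iq_smul_trans[OF bc cong_Iq_smul_trans[OF bd cb]] by (simp add: pbw_word_def)
  qed
  have "cong_Iq s (mon (Ga # replicate i Gd @ replicate j Gb @ Gd # replicate k Gc))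
     (smul ((s\<^sup>2) ^ j) (smul (s\<^sup>2) (smul ((s\<^sup>2) ^ i * (s\<^sup>2) ^ i) (mon (pbw_word Gd i (Suc j) (Suc k))))
       + mon (pbw_word Gd i j k)))"
    using bd ad bc_d by (meson cong_Iq_add cong_Iq_refl cong_Iq_smul cong_Iq_trans)
  moreover have "smul ((s\<^sup>2) ^ j) (smul (s\<^sup>2) (smul ((s\<^sup>2) ^ i * (s\<^sup>2) ^ i) (mon (pbw_word Gd i (Suc j) (Suc k))))
       + mon (pbw_word Gd i j k))
    = smul ((s\<^sup>2) ^ j * (s\<^sup>2 * ((s\<^sup>2) ^ i * (s\<^sup>2) ^ i))) (mon (pbw_word Gd i (Suc j) (Suc k)))
      + smul ((s\<^sup>2) ^ j) (mon (pbw_word Gd i j k))"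
    by (simp add: smul_def fun_eq_iff algebra_simps)
  ultimately show ?thesis
    by simp
qed

section \<open>The braiding on a monomial and a generator\<close>

lemma row_ent [simp]: "row (ent k l) = k"
  by (cases k; cases l) auto

lemma col_ent [simp]: "col (ent k l) = l"
  by (cases k; cases l) auto

lemma KS_0: "KS 0 = {[]}"
  by (auto simp: KS_def)

lemma finite_KS: "finite (KS n)"
  unfolding KS_def using finite_lists_length_eq[of "UNIV :: bool set" n] by simp

lemma sum_KS_Suc: "sum f (KS (Suc n)) = (\<Sum>k\<in>UNIV. \<Sum>ks\<in>KS n. f (k # ks))"
proof -
  have "KS (Suc n) = (\<lambda>(k, ks). k # ks) ` (UNIV \<times> KS n)"
    by (auto simp: KS_def image_iff length_Suc_conv)
  moreover have "inj_on (\<lambda>(k, ks). k # ks) (UNIV \<times> KS n)"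
    by (auto simp: inj_on_def)
  ultimately show ?thesis
    by (simp add: sum.reindex sum.cartesian_product split_def)
qed

lemma sum_KS_one: "sum f (KS (Suc 0)) = f [False] + f [True]"
  by (simp add: sum_KS_Suc KS_0 UNIV_bool)

lemma rform_w_Cons_gen:
  "rform_w s (x # u) [y] = r1 s x (ent (row y) False) * rform_w s u [ent False (col y)]
                         + r1 s x (ent (row y) True) * rform_w s u [ent True (col y)]"
  by (simp add: sum_KS_one lw_def rtw_def)

definition lmul_gen :: "gen \<Rightarrow> fa \<Rightarrow> fa" where
  "lmul_gen y f = (\<lambda>w. case w of [] \<Rightarrow> 0 | z # w' \<Rightarrow> if z = y then f w' else 0)"

lemma fmul_mon_gen_left: "fmul (mon [y]) f = lmul_gen y f"
  by (auto simp: fmul_mon_left_apply lmul_gen_def fun_eq_iff split: list.split)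

lemma mon_Cons: "mon (y # u) = lmul_gen y (mon u)"
  by (auto simp: mon_def lmul_gen_def fun_eq_iff split: list.split)

lemma lmul_gen_sum: "lmul_gen y (\<lambda>v. \<Sum>k\<in>K. c k * f k v) = (\<lambda>w. \<Sum>k\<in>K. c k * lmul_gen y (f k) w)"
  by (auto simp: lmul_gen_def fun_eq_iff split: list.split)

lemma lmul_gen_smul: "lmul_gen y (smul c f) = smul c (lmul_gen y f)"
  by (auto simp: lmul_gen_def smul_def fun_eq_iff split: list.split)

lemma lmul_gen_zero [simp]: "lmul_gen y 0 = 0" "lmul_gen y (\<lambda>_. 0) = (\<lambda>_. 0)"
  by (auto simp: lmul_gen_def fun_eq_iff split: list.split)

lemma lmul_gen_fmul_mon: "lmul_gen y (fmul (mon u) f) = fmul (mon (y # u)) f"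
  using fmul_mon_left_assoc[of "[y]" u f] by (simp add: fmul_mon_gen_left)

text \<open>In Sweedler notation, \<open>coact_r s w l c = w_(1) r(w_(2), ent l c)\<close>.\<close>

definition coact_r :: "complex \<Rightarrow> word \<Rightarrow> bool \<Rightarrow> bool \<Rightarrow> fa" where
  "coact_r s w l c = (\<lambda>v. \<Sum>ks\<in>KS (length w). rform_w s (rtw w ks) [ent l c] * mon (lw w ks) v)"

lemma lmul_gen_coact_r: "lmul_gen y (coact_r s w l c)
   = (\<lambda>v. \<Sum>ks\<in>KS (length w). rform_w s (rtw w ks) [ent l c] * lmul_gen y (mon (lw w ks)) v)"
  unfolding coact_r_def by (rule lmul_gen_sum)

lemma coact_r_Nil: "coact_r s [] l c = (if l = c then mon [] else 0)"
  by (auto simp: coact_r_def KS_0 lw_def rtw_def eps_w_def fun_eq_iff)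

lemma coact_r_Cons: "coact_r s (x # w) l c =
     smul (r1 s (ent False (col x)) (ent l False)) (lmul_gen (ent (row x) False) (coact_r s w False c))
   + smul (r1 s (ent False (col x)) (ent l True)) (lmul_gen (ent (row x) False) (coact_r s w True c))
   + smul (r1 s (ent True (col x)) (ent l False)) (lmul_gen (ent (row x) True) (coact_r s w False c))
   + smul (r1 s (ent True (col x)) (ent l True)) (lmul_gen (ent (row x) True) (coact_r s w True c))"
proof -
  have "coact_r s (x # w) l c = (\<lambda>v. \<Sum>k\<in>UNIV. \<Sum>ks\<in>KS (length w).
       (r1 s (ent k (col x)) (ent l False) * rform_w s (rtw w ks) [ent False c]
      + r1 s (ent k (col x)) (ent l True) * rform_w s (rtw w ks) [ent True c])
        * lmul_gen (ent (row x) k) (mon (lw w ks)) v)"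
    by (simp add: coact_r_def sum_KS_Suc lw_def rtw_def mon_Cons rform_w_Cons_gen del: rform_w.simps)
  then show ?thesis
    unfolding lmul_gen_coact_r
    by (simp add: smul_def fun_eq_iff UNIV_bool sum.distrib sum_distrib_left algebra_simps)
qed

text \<open>\<open>psi_mul s w x = \<mu>\<Psi>(w \<otimes> x) = x_(1) w_(1) r(w_(2), x_(2))\<close> for a generator \<open>x\<close>.\<close>

definition psi_mul :: "complex \<Rightarrow> word \<Rightarrow> gen \<Rightarrow> fa" where
  "psi_mul s w x = lmul_gen (ent (row x) False) (coact_r s w False (col x))
                 + lmul_gen (ent (row x) True) (coact_r s w True (col x))"

lemma lsum_delta:
  assumes "finite K"
  shows "lsum (\<lambda>p. \<Sum>k\<in>K. if p = P k then r k else 0) F = (\<lambda>j. \<Sum>k\<in>K. r k * F (P k) j)"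
proof
  fix j
  define c where "c = (\<lambda>p. \<Sum>k\<in>K. if p = P k then r k else 0)"
  have "{p. c p \<noteq> 0} \<subseteq> P ` K"
  proof
    fix p assume "p \<in> {p. c p \<noteq> 0}"
    then obtain k where "k \<in> K" "(if p = P k then r k else 0) \<noteq> 0"
      unfolding c_def by (blast elim: sum.not_neutral_contains_not_neutral)
    then show "p \<in> P ` K" by (auto split: if_splits)
  qed
  then have "lsum c F j = (\<Sum>p\<in>P ` K. c p * F p j)"
    unfolding lsum_def using assms by (intro sum.mono_neutral_left) auto
  also have "\<dots> = (\<Sum>k\<in>K. \<Sum>p\<in>P ` K. if p = P k then r k * F p j else 0)"
    unfolding c_def sum_distrib_right by (subst sum.swap) (auto intro!: sum.cong)
  also have "\<dots> = (\<Sum>k\<in>K. r k * F (P k) j)"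
    using assms by simp
  finally show "lsum c F j = (\<Sum>k\<in>K. r k * F (P k) j)" .
qed

lemma lsum_smul: "lsum (smul c T) F = smul c (lsum T F)"
proof (cases "c = 0")
  case False
  then have "{i. smul c T i \<noteq> 0} = {i. T i \<noteq> 0}" by (auto simp: smul_def)
  then show ?thesis by (simp add: lsum_def smul_def fun_eq_iff sum_distrib_left mult.assoc)
qed (simp add: lsum_def smul_def fun_eq_iff)

lemma Psi_tens_mon: "Psi s (tens (mon w) (mon v)) = psi_w s w v"
proof -
  have "tens (mon w) (mon v) = (\<lambda>p. if p = (w, v) then 1 else 0)"
    by (auto simp: tens_def mon_def fun_eq_iff)
  moreover have "{p. (if p = (w, v) then 1 else 0 :: complex) \<noteq> 0} = {(w, v)}"
    by auto
  ultimately show ?thesis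
    by (simp add: Psi_def lsum_def)
qed

lemma mu_s1_Psi_mon:
  "mu_s1 \<sigma> (Psi s (tens (mon w) (mon v))) = (\<lambda>j. \<Sum>kl\<in>KS (length w) \<times> KS (length v).
     rform_w s (rtw w (fst kl)) (rtw v (snd kl)) * fmul (\<sigma> (mon (lw v (snd kl)))) (mon (lw w (fst kl))) j)"
proof -
  have psi: "psi_w s w v = (\<lambda>p. \<Sum>kl\<in>KS (length w) \<times> KS (length v).
     if p = (lw v (snd kl), lw w (fst kl)) then rform_w s (rtw w (fst kl)) (rtw v (snd kl)) else 0)"
    by (simp add: psi_w_def sum.cartesian_product split_def)
  show ?thesis
    unfolding mu_s1_def Psi_tens_mon psi by (subst lsum_delta) (auto simp: finite_KS)
qed

lemma b1_smul_left: "b1 s \<sigma> (smul c f) g = smul c (b1 s \<sigma> f g)"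
proof -
  have "tens (smul c f) g = smul c (tens f g)"
    by (auto simp: tens_def smul_def fun_eq_iff)
  then show ?thesis
    by (simp add: b1_def fmul_smul_left Psi_def mu_s1_def lsum_smul smul_diff)
qed

lemma b1_mon_gen:
  assumes \<sigma>_gen: "\<forall>y. \<sigma> (mon [y]) - smul (s ^ 3) (mon [y]) \<in> Iq s"
  shows "cong_Iq s (b1 s \<sigma> (mon w) (mon [x])) (mon (w @ [x]) - smul (s ^ 3) (psi_mul s w x))"
proof -
  define K where "K = KS (length w) \<times> KS (Suc 0)"
  define r where "r = (\<lambda>kl. rform_w s (rtw w (fst kl)) (rtw [x] (snd kl)))"
  define F where "F = (\<lambda>kl. fmul (\<sigma> (mon (lw [x] (snd kl)))) (mon (lw w (fst kl))))"
  define G where "G = (\<lambda>kl. smul (s ^ 3) (mon (lw [x] (snd kl) @ lw w (fst kl))))"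
  have mu: "mu_s1 \<sigma> (Psi s (tens (mon w) (mon [x]))) = (\<lambda>j. \<Sum>kl\<in>K. r kl * F kl j)"
    unfolding mu_s1_Psi_mon K_def r_def F_def by simp
  have FG: "F kl - G kl \<in> Iq s" if kl: "kl \<in> K" for kl
  proof -
    obtain l where l: "snd kl = [l]"
      using kl by (auto simp: K_def KS_def mem_Times_iff length_Suc_conv)
    have "F kl - G kl = fmul (\<sigma> (mon [ent (row x) l]) - smul (s ^ 3) (mon [ent (row x) l])) (mon (lw w (fst kl)))"
      unfolding F_def G_def l by (simp add: lw_def fmul_diff_left fmul_smul_left fmul_mon_mon)
    then show ?thesis
      using Iq_fmul_mon_right \<sigma>_gen by simp
  qed
  have "(\<lambda>j. \<Sum>kl\<in>K. r kl * F kl j) - (\<lambda>j. \<Sum>kl\<in>K. r kl * G kl j) = (\<Sum>kl\<in>K. smul (r kl) (F kl - G kl))"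
    by (simp add: fun_eq_iff sum_apply smul_def right_diff_distrib sum_subtractf)
  also have "\<dots> \<in> Iq s"
    by (rule Iq_sum) (simp add: FG Iq_smul)
  finally have FG_sum: "(\<lambda>j. \<Sum>kl\<in>K. r kl * F kl j) - (\<lambda>j. \<Sum>kl\<in>K. r kl * G kl j) \<in> Iq s" .
  have G_sum: "(\<lambda>j. \<Sum>kl\<in>K. r kl * G kl j) = smul (s ^ 3) (psi_mul s w x)"
  proof
    fix j
    have "(\<Sum>kl\<in>K. r kl * G kl j) = (\<Sum>ks\<in>KS (length w). \<Sum>ls\<in>KS (Suc 0). r (ks, ls) * G (ks, ls) j)"
      unfolding K_def by (simp add: sum.cartesian_product)
    also have "\<dots> = smul (s ^ 3) (psi_mul s w x) j"
      by (simp add: sum_KS_one r_def G_def psi_mul_def lmul_gen_coact_r lw_def rtw_def smul_def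
          mon_Cons sum.distrib sum_distrib_left algebra_simps)
    finally show "(\<Sum>kl\<in>K. r kl * G kl j) = smul (s ^ 3) (psi_mul s w x) j" .
  qed
  have "b1 s \<sigma> (mon w) (mon [x]) - (mon (w @ [x]) - smul (s ^ 3) (psi_mul s w x))
      = - ((\<lambda>j. \<Sum>kl\<in>K. r kl * F kl j) - (\<lambda>j. \<Sum>kl\<in>K. r kl * G kl j))"
    unfolding b1_def mu G_sum fmul_mon_mon by (simp add: algebra_simps)
  then show ?thesis
    unfolding cong_Iq_def using Iq_uminus[OF FG_sum] by simp
qed

fun col_weight :: "word \<Rightarrow> int" where
  "col_weight [] = 0"
| "col_weight (x # w) = (if col x then -1 else 1) + col_weight w"

lemma col_weight_append: "col_weight (u @ v) = col_weight u + col_weight v"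
  by (induction u) auto

lemma col_weight_replicate: "col_weight (replicate n x) = int n * (if col x then -1 else 1)"
  by (induction n) (auto simp: algebra_simps)

lemma col_weight_pbw_word: "col_weight (pbw_word x i j k) = int i * (if col x then -1 else 1) - int j + int k"
  by (simp add: pbw_word_def col_weight_append col_weight_replicate)

lemma smul_lmul_gen_smul_mon: "smul c (lmul_gen y (smul d (mon w))) = smul (c * d) (mon (y # w))"
  by (simp add: lmul_gen_smul smul_smul mon_Cons)

lemma coact_r_TF: "coact_r s w True False = 0"
proof (induction w)
  case Nil
  then show ?case by (simp add: coact_r_Nil)
next
  case (Cons x w)
  then show ?case by (cases x) (simp_all add: coact_r_Cons)
qed

lemma coact_r_diagonal:
  assumes "s \<noteq> 0"
  shows "coact_r s w False False = smul (s powi col_weight w) (mon w)"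
    and "coact_r s w True True = smul (s powi (- col_weight w)) (mon w)"
proof (induction w)
  case Nil
  show "coact_r s [] False False = smul (s powi col_weight []) (mon [])"
    and "coact_r s [] True True = smul (s powi (- col_weight [])) (mon [])"
    by (simp_all add: coact_r_Nil)
next
  case (Cons x w)
  show "coact_r s (x # w) False False = smul (s powi col_weight (x # w)) (mon (x # w))"
    and "coact_r s (x # w) True True = smul (s powi (- col_weight (x # w))) (mon (x # w))"
    by (cases x; simp add: coact_r_Cons Cons coact_r_TF smul_lmul_gen_smul_mon
        power_int_diff power_int_add power_int_minus assms field_simps)+
qed

lemma psi_mul_ac:
  assumes "s \<noteq> 0" and "x \<in> {Ga, Gc}"
  shows "psi_mul s w x = smul (s powi col_weight w) (mon (x # w))"
  using assms by (auto simp: psi_mul_def coact_r_diagonal coact_r_TF lmul_gen_smul mon_Cons)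

lemma psi_mul_b: "s \<noteq> 0 \<Longrightarrow>
    psi_mul s w Gb = lmul_gen Ga (coact_r s w False True) + smul (s powi (- col_weight w)) (mon (Gb # w))"
  and psi_mul_d: "s \<noteq> 0 \<Longrightarrow>
    psi_mul s w Gd = lmul_gen Gc (coact_r s w False True) + smul (s powi (- col_weight w)) (mon (Gd # w))"
  by (simp_all add: psi_mul_def coact_r_diagonal lmul_gen_smul mon_Cons)

lemma coact_r_FT_Cons_bd:
  "y \<in> {Gb, Gd} \<Longrightarrow> coact_r s (y # w) False True = smul (1 / s) (lmul_gen y (coact_r s w False True))"
  by (auto simp: coact_r_Cons)

lemma coact_r_FT_Cons_c: "coact_r s (Gc # w) False True =
    smul s (lmul_gen Gc (coact_r s w False True)) + smul (1 / s * (s\<^sup>2 - 1 / s\<^sup>2)) (lmul_gen Gd (coact_r s w True True))"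
  by (simp add: coact_r_Cons)

lemma coact_r_FT_bd_prefix:
  assumes "set u \<subseteq> {Gb, Gd}"
  shows "coact_r s (u @ v) False True = smul ((1 / s) ^ length u) (fmul (mon u) (coact_r s v False True))"
  using assms
proof (induction u)
  case Nil
  then show ?case by (simp add: fmul_mon_Nil_left)
next
  case (Cons y u)
  then show ?case
    by (simp add: coact_r_FT_Cons_bd lmul_gen_smul smul_smul lmul_gen_fmul_mon)
qed

lemma coact_r_FT_bd_word: "set u \<subseteq> {Gb, Gd} \<Longrightarrow> coact_r s u False True = 0"
  using coact_r_FT_bd_prefix[where v = "[]"] by (simp add: coact_r_Nil fmul_zero_right)

lemma coact_r_FT_replicate_c:
  assumes s: "s \<noteq> 0"
  shows "cong_Iq s (coact_r s (replicate (Suc k) Gc) False True)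
                   (smul ((s ^ (4 * k + 4) - 1) / s ^ (k + 3)) (mon (Gd # replicate k Gc)))"
proof (induction k)
  case 0
  have "coact_r s [Gc] False True = smul ((s ^ 4 - 1) / s ^ 3) (mon [Gd])"
    using s by (simp add: coact_r_FT_Cons_c coact_r_Nil coact_r_diagonal lmul_gen_smul
        mon_Cons[symmetric] smul_def fun_eq_iff field_simps power2_eq_square power3_eq_cube power4_eq_xxxx)
  then show ?case by (simp add: cong_Iq_refl)
next
  case (Suc k)
  let ?g = "\<lambda>k. (s ^ (4 * k + 4) - 1) / s ^ (k + 3)"
  let ?m = "mon (Gd # Gc # replicate k Gc)"
  have unfold: "coact_r s (replicate (Suc (Suc k)) Gc) False True
      = smul s (lmul_gen Gc (coact_r s (replicate (Suc k) Gc) False True))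
      + smul (1 / s * (s\<^sup>2 - 1 / s\<^sup>2)) (smul (s powi (- int (Suc k))) ?m)"
    by (simp only: replicate_Suc[of "Suc k"] coact_r_FT_Cons_c coact_r_diagonal[OF s]
        col_weight_replicate lmul_gen_smul mon_Cons[symmetric]) simp
  have "cong_Iq s (lmul_gen Gc (coact_r s (replicate (Suc k) Gc) False True))
                  (smul (?g k) (mon (Gc # Gd # replicate k Gc)))"
    using cong_Iq_fmul_mon_left[OF Suc, of "[Gc]"]
    unfolding fmul_mon_gen_left lmul_gen_smul mon_Cons[symmetric] .
  moreover have "cong_Iq s (mon (Gc # Gd # replicate k Gc)) (smul (s\<^sup>2) ?m)"
    using qcommute_cd unfolding qcommute_def by (metis append_Cons append_Nil)
  ultimately have "cong_Iq s (coact_r s (replicate (Suc (Suc k)) Gc) False True)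
     (smul s (smul (?g k) (smul (s\<^sup>2) ?m)) + smul (1 / s * (s\<^sup>2 - 1 / s\<^sup>2)) (smul (s powi (- int (Suc k))) ?m))"
    unfolding unfold by (meson cong_Iq_add cong_Iq_refl cong_Iq_smul cong_Iq_trans)
  moreover have coeff: "s * (?g k * s\<^sup>2) + 1 / s * (s\<^sup>2 - 1 / s\<^sup>2) * s powi (- int (Suc k)) = ?g (Suc k)"
    using s unfolding power_int_minus power_int_of_nat
    by (simp add: field_simps power_add power2_eq_square power3_eq_cube power4_eq_xxxx)
      (simp add: eval_nat_numeral)
  moreover have "smul s (smul (?g k) (smul (s\<^sup>2) ?m)) + smul (1 / s * (s\<^sup>2 - 1 / s\<^sup>2)) (smul (s powi (- int (Suc k))) ?m)
      = smul (?g (Suc k)) ?m"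
    unfolding coeff[symmetric] by (simp add: smul_def fun_eq_iff algebra_simps)
  ultimately show ?case
    by (simp only: replicate_Suc)
qed

section \<open>The image of \<open>b\<^sub>1\<close> modulo the relations\<close>

definition b1_image :: "complex \<Rightarrow> (fa \<Rightarrow> fa) \<Rightarrow> fa set" where
  "b1_image s \<sigma> = {h. \<exists>(n::nat) fs gs. (\<forall>i<n. fs i \<in> FA \<and> gs i \<in> FA)
                        \<and> h - (\<Sum>i<n. b1 s \<sigma> (fs i) (gs i)) \<in> Iq s}"

lemma b1_imageI:
  fixes n :: nat
  assumes "\<forall>i<n. fs i \<in> FA \<and> gs i \<in> FA" and "h - (\<Sum>i<n. b1 s \<sigma> (fs i) (gs i)) \<in> Iq s"
  shows "h \<in> b1_image s \<sigma>"
  using assms unfolding b1_image_def by blast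

lemma b1_imageE:
  assumes "h \<in> b1_image s \<sigma>"
  obtains n :: nat and fs gs where "\<forall>i<n. fs i \<in> FA \<and> gs i \<in> FA"
    and "h - (\<Sum>i<n. b1 s \<sigma> (fs i) (gs i)) \<in> Iq s"
  using assms unfolding b1_image_def by blast

lemma Iq_subset_b1_image: "h \<in> Iq s \<Longrightarrow> h \<in> b1_image s \<sigma>"
  by (rule b1_imageI[where n = 0]) simp_all

lemma b1_in_b1_image: "f \<in> FA \<Longrightarrow> g \<in> FA \<Longrightarrow> b1 s \<sigma> f g \<in> b1_image s \<sigma>"
  by (rule b1_imageI[where n = 1 and fs = "\<lambda>_. f" and gs = "\<lambda>_. g"]) (simp_all add: Iq_zero)

lemma b1_image_cong:
  assumes "h \<in> b1_image s \<sigma>" and "cong_Iq s h' h"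
  shows "h' \<in> b1_image s \<sigma>"
proof -
  obtain n :: nat and fs gs where FA: "\<forall>i<n. fs i \<in> FA \<and> gs i \<in> FA"
    and I: "h - (\<Sum>i<n. b1 s \<sigma> (fs i) (gs i)) \<in> Iq s"
    using assms(1) by (rule b1_imageE)
  have "h' - (\<Sum>i<n. b1 s \<sigma> (fs i) (gs i)) = (h' - h) + (h - (\<Sum>i<n. b1 s \<sigma> (fs i) (gs i)))"
    by simp
  also have "\<dots> \<in> Iq s"
    using assms(2) I unfolding cong_Iq_def by (rule Iq_add)
  finally show ?thesis
    using FA by (intro b1_imageI)
qed

lemma sum_lessThan_add: "(\<Sum>i<m + (n::nat). f i) = (\<Sum>i<m. f i) + (\<Sum>i<n. f (m + i))"
  by (induction n) (simp_all add: add.assoc)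

lemma b1_image_add:
  assumes "h1 \<in> b1_image s \<sigma>" and "h2 \<in> b1_image s \<sigma>"
  shows "h1 + h2 \<in> b1_image s \<sigma>"
proof -
  obtain n1 :: nat and fs1 gs1 where FA1: "\<forall>i<n1. fs1 i \<in> FA \<and> gs1 i \<in> FA"
    and I1: "h1 - (\<Sum>i<n1. b1 s \<sigma> (fs1 i) (gs1 i)) \<in> Iq s"
    using assms(1) by (rule b1_imageE)
  obtain n2 :: nat and fs2 gs2 where FA2: "\<forall>i<n2. fs2 i \<in> FA \<and> gs2 i \<in> FA"
    and I2: "h2 - (\<Sum>i<n2. b1 s \<sigma> (fs2 i) (gs2 i)) \<in> Iq s"
    using assms(2) by (rule b1_imageE)
  define fs where "fs = (\<lambda>i. if i < n1 then fs1 i else fs2 (i - n1))"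
  define gs where "gs = (\<lambda>i. if i < n1 then gs1 i else gs2 (i - n1))"
  have "(\<Sum>i<n1 + n2. b1 s \<sigma> (fs i) (gs i))
      = (\<Sum>i<n1. b1 s \<sigma> (fs1 i) (gs1 i)) + (\<Sum>i<n2. b1 s \<sigma> (fs2 i) (gs2 i))"
    unfolding sum_lessThan_add by (simp add: fs_def gs_def)
  then have eq: "h1 + h2 - (\<Sum>i<n1 + n2. b1 s \<sigma> (fs i) (gs i))
      = (h1 - (\<Sum>i<n1. b1 s \<sigma> (fs1 i) (gs1 i))) + (h2 - (\<Sum>i<n2. b1 s \<sigma> (fs2 i) (gs2 i)))"
    by (simp add: algebra_simps)
  have "h1 + h2 - (\<Sum>i<n1 + n2. b1 s \<sigma> (fs i) (gs i)) \<in> Iq s"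
    unfolding eq by (rule Iq_add[OF I1 I2])
  moreover have "\<forall>i<n1 + n2. fs i \<in> FA \<and> gs i \<in> FA"
    using FA1 FA2 by (auto simp: fs_def gs_def)
  ultimately show ?thesis
    by (rule b1_imageI[rotated])
qed

lemma smul_sum: "smul c (sum F A) = (\<Sum>a\<in>A. smul c (F a))"
  by (simp add: fun_eq_iff smul_def sum_apply sum_distrib_left)

lemma b1_image_smul:
  assumes "h \<in> b1_image s \<sigma>"
  shows "smul c h \<in> b1_image s \<sigma>"
proof -
  obtain n :: nat and fs gs where FA: "\<forall>i<n. fs i \<in> FA \<and> gs i \<in> FA"
    and I: "h - (\<Sum>i<n. b1 s \<sigma> (fs i) (gs i)) \<in> Iq s"
    using assms by (rule b1_imageE)
  have "smul c h - (\<Sum>i<n. b1 s \<sigma> (smul c (fs i)) (gs i)) = smul c (h - (\<Sum>i<n. b1 s \<sigma> (fs i) (gs i)))"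
    by (simp add: b1_smul_left smul_diff smul_sum)
  then have "smul c h - (\<Sum>i<n. b1 s \<sigma> (smul c (fs i)) (gs i)) \<in> Iq s"
    using Iq_smul[OF I] by simp
  moreover have "\<forall>i<n. smul c (fs i) \<in> FA \<and> gs i \<in> FA"
    using FA smul_in_FA by simp
  ultimately show ?thesis
    by (rule b1_imageI[rotated])
qed

lemma b1_image_sum: "(\<And>a. a \<in> A \<Longrightarrow> F a \<in> b1_image s \<sigma>) \<Longrightarrow> sum F A \<in> b1_image s \<sigma>"
  by (induction A rule: infinite_finite_induct)
    (simp_all add: Iq_subset_b1_image Iq_zero b1_image_add)

lemma b1_image_solve:
  assumes "R \<in> b1_image s \<sigma>" and "X \<in> b1_image s \<sigma>"
    and "cong_Iq s R (smul C m + smul D X)" and "C \<noteq> 0"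
  shows "m \<in> b1_image s \<sigma>"
proof -
  have "cong_Iq s (smul (1 / C) (R + smul (- D) X)) (smul (1 / C) (smul C m + smul D X + smul (- D) X))"
    using assms(3) by (intro cong_Iq_smul cong_Iq_add cong_Iq_refl)
  moreover have "smul (1 / C) (smul C m + smul D X + smul (- D) X) = m"
    using assms(4) by (simp add: smul_def fun_eq_iff field_simps)
  moreover have "smul (1 / C) (R + smul (- D) X) \<in> b1_image s \<sigma>"
    using assms(1,2) by (simp add: b1_image_add b1_image_smul)
  ultimately show ?thesis
    using b1_image_cong cong_Iq_sym by metis
qed

lemma pbw_span_subset_b1_image:
  assumes "\<And>x i j k. x \<in> {Ga, Gd} \<Longrightarrow> mon (pbw_word x i j k) \<in> b1_image s \<sigma>"
  shows "f \<in> pbw_span s \<Longrightarrow> f \<in> b1_image s \<sigma>"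
proof (induction f rule: pbw_span.induct)
  case (pbw_span_mon x i j k)
  then show ?case by (rule assms)
next
  case (pbw_span_add f g)
  then show ?case by (blast intro: b1_image_add)
next
  case (pbw_span_smul f c)
  then show ?case by (blast intro: b1_image_smul)
next
  case (pbw_span_cong f g)
  then show ?case by (blast intro: b1_image_cong)
qed

section \<open>Every PBW monomial lies in the image\<close>

locale generic_ribbon =
  fixes s :: complex and \<sigma> :: "fa \<Rightarrow> fa"
  assumes s_nonzero: "s \<noteq> 0"
    and not_root_of_unity: "\<forall>n::nat. n > 0 \<longrightarrow> (s\<^sup>2) ^ n \<noteq> 1"
    and \<sigma>_gen: "\<forall>y. \<sigma> (mon [y]) - smul (s ^ 3) (mon [y]) \<in> Iq s"
begin

lemma s_power_ne_one: "N > 0 \<Longrightarrow> s ^ N \<noteq> 1"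
  using not_root_of_unity by (metis power_one power_mult mult.commute)

lemma in_b1_image_from_b1_gen_plus:
  assumes "cong_Iq s (mon (w @ [x])) (smul cw m + smul dw X)"
    and "cong_Iq s (psi_mul s w x) (smul cp m + smul dp X)"
    and "cw - s ^ 3 * cp \<noteq> 0" and "X \<in> b1_image s \<sigma>"
  shows "m \<in> b1_image s \<sigma>"
proof -
  have "cong_Iq s (b1 s \<sigma> (mon w) (mon [x])) (smul (cw - s ^ 3 * cp) m + smul (dw - s ^ 3 * dp) X)"
    using b1_mon_gen[OF \<sigma>_gen] cong_Iq_lincomb_diff[OF assms(1,2)] by (rule cong_Iq_trans)
  then show ?thesis
    using b1_image_solve b1_in_b1_image mon_in_FA assms(3,4) by blast
qed

lemma in_b1_image_from_b1_gen:
  assumes "cong_Iq s (mon (w @ [x])) (smul cw m)" and "cong_Iq s (psi_mul s w x) (smul cp m)"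
    and "cw - s ^ 3 * cp \<noteq> 0"
  shows "m \<in> b1_image s \<sigma>"
  using in_b1_image_from_b1_gen_plus[where X = 0 and dw = 0 and dp = 0] assms
  by (simp add: Iq_subset_b1_image Iq_zero)

lemma pbw_a_in_b1_image: "mon (pbw_word Ga (Suc i) j k) \<in> b1_image s \<sigma>"
proof -
  let ?m = "mon (pbw_word Ga (Suc i) j k)"
  have "cong_Iq s (mon (pbw_word Ga i j k @ [Ga])) (smul ((1 / s\<^sup>2) ^ k * (1 / s\<^sup>2) ^ j) ?m)"
    using cong_Iq_move_past_bc[OF qcommute_ba[OF s_nonzero] qcommute_ca[OF s_nonzero], of "replicate i Ga" j k]
    by (simp add: pbw_word_def replicate_app_Cons_same)
  moreover have "cong_Iq s (psi_mul s (pbw_word Ga i j k) Ga) (smul (s ^ i * s ^ k / s ^ j) ?m)"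
    using s_nonzero
    by (simp add: psi_mul_ac col_weight_pbw_word power_int_add power_int_diff)
      (simp add: pbw_word_def cong_Iq_refl)
  moreover have "(1 / s\<^sup>2) ^ k * (1 / s\<^sup>2) ^ j - s ^ 3 * (s ^ i * s ^ k / s ^ j)
      = (1 - s ^ (3 + i + j + 3 * k)) / s ^ (2 * j + 2 * k)"
    using s_nonzero
    by (simp add: field_simps)
      (simp add: power_add[symmetric] mult.assoc[symmetric] power_mult_distrib[symmetric]
        power_mult[symmetric] algebra_simps)
  then have "(1 / s\<^sup>2) ^ k * (1 / s\<^sup>2) ^ j - s ^ 3 * (s ^ i * s ^ k / s ^ j) \<noteq> 0"
    using s_power_ne_one[of "3 + i + j + 3 * k"] s_nonzero by simp
  ultimately show ?thesis
    by (rule in_b1_image_from_b1_gen)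
qed

lemma pbw_d_c_in_b1_image: "mon (pbw_word Gd i 0 (Suc k)) \<in> b1_image s \<sigma>"
proof -
  let ?w = "pbw_word Gd i 0 k" and ?m = "mon (pbw_word Gd i 0 (Suc k))"
  have "cong_Iq s (mon (?w @ [Gc])) (smul 1 ?m)"
    by (simp add: pbw_word_snoc_c cong_Iq_refl)
  moreover have "cong_Iq s (psi_mul s ?w Gc) (smul (s ^ k / s ^ i * (s\<^sup>2) ^ i) ?m)"
    using cong_Iq_smul[OF Cons_c_pbw_word_d, of s "s ^ k / s ^ i" i k] s_nonzero
    by (simp add: psi_mul_ac col_weight_pbw_word power_int_add power_int_diff smul_smul)
  moreover have "1 - s ^ 3 * (s ^ k / s ^ i * (s\<^sup>2) ^ i) = 1 - s ^ (3 + i + k)"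
    using s_nonzero by (simp add: power_add power2_eq_square field_simps)
  then have "1 - s ^ 3 * (s ^ k / s ^ i * (s\<^sup>2) ^ i) \<noteq> 0"
    using s_power_ne_one[of "3 + i + k"] by simp
  ultimately show ?thesis
    by (rule in_b1_image_from_b1_gen)
qed

lemma bc_in_b1_image: "mon [Gb, Gc] \<in> b1_image s \<sigma>"
proof -
  have "cong_Iq s (mon ([Gb] @ [Gc])) (smul 1 (mon [Gb, Gc]))"
    by (simp add: cong_Iq_refl)
  moreover have "cong_Iq s (psi_mul s [Gb] Gc) (smul (1 / s) (mon [Gb, Gc]))"
    using cong_Iq_smul[OF qcommute_cb[unfolded qcommute_def, rule_format, of s "[]" "[]"]] s_nonzero
    by (simp add: psi_mul_ac power_int_minus inverse_eq_divide)
  moreover have "1 - s ^ 3 * (1 / s) \<noteq> 0"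
    using s_power_ne_one[of 2] s_nonzero by (simp add: power2_eq_square power3_eq_cube)
  ultimately show ?thesis
    by (rule in_b1_image_from_b1_gen)
qed

lemma pbw_d_in_b1_image: "mon (pbw_word Gd (Suc i) 0 0) \<in> b1_image s \<sigma>"
proof -
  let ?w = "replicate i Gd" and ?m = "mon (pbw_word Gd (Suc i) 0 0)"
  have "cong_Iq s (mon (?w @ [Gd])) (smul 1 ?m)"
    by (simp add: pbw_word_def replicate_append_same cong_Iq_refl)
  moreover have "cong_Iq s (psi_mul s ?w Gd) (smul (s ^ i) ?m)"
    using s_nonzero
    by (simp add: psi_mul_d coact_r_FT_bd_word set_replicate_conv_if col_weight_replicate
        pbw_word_def cong_Iq_refl)
  moreover have "1 - s ^ 3 * s ^ i \<noteq> 0"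
    using s_power_ne_one[of "3 + i"] by (simp add: power_add)
  ultimately show ?thesis
    by (rule in_b1_image_from_b1_gen)
qed

lemma one_in_b1_image: "mon [] \<in> b1_image s \<sigma>"
proof -
  have "cong_Iq s (mon ([Gd] @ [Ga])) (smul 1 (mon []) + smul (1 / s\<^sup>2) (mon [Gb, Gc]))"
    using da_relation[of s "[]" "[]"] by (simp add: add.commute)
  moreover have "cong_Iq s (psi_mul s [Gd] Ga) (smul (1 / s) (mon []) + smul (s\<^sup>2 / s) (mon [Gb, Gc]))"
  proof -
    have "cong_Iq s (smul (1 / s) (mon ([] @ [Ga, Gd] @ [])))
        (smul (1 / s) (smul (s\<^sup>2) (mon ([] @ [Gb, Gc] @ [])) + mon ([] @ [])))"
      by (rule cong_Iq_smul[OF ad_relation])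
    moreover have "psi_mul s [Gd] Ga = smul (1 / s) (mon [Ga, Gd])"
      using s_nonzero by (simp add: psi_mul_ac power_int_minus inverse_eq_divide)
    moreover have "smul (1 / s) (smul (s\<^sup>2) (mon [Gb, Gc]) + mon [])
        = smul (1 / s) (mon []) + smul (s\<^sup>2 / s) (mon [Gb, Gc])"
      by (simp add: smul_def fun_eq_iff algebra_simps)
    ultimately show ?thesis
      by simp
  qed
  moreover have "1 - s ^ 3 * (1 / s) \<noteq> 0"
    using s_power_ne_one[of 2] s_nonzero by (simp add: power2_eq_square power3_eq_cube)
  ultimately show ?thesis
    using bc_in_b1_image by (rule in_b1_image_from_b1_gen_plus)
qed

lemma pbw_d_b_in_b1_image: "mon (pbw_word Gd i (Suc j) 0) \<in> b1_image s \<sigma>"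
proof -
  let ?w = "pbw_word Gd i j 0" and ?m = "mon (pbw_word Gd i (Suc j) 0)"
  have "cong_Iq s (mon (?w @ [Gb])) (smul 1 ?m)"
    using pbw_word_snoc_b by simp
  moreover have "cong_Iq s (psi_mul s ?w Gb) (smul (s ^ i * s ^ j * (s\<^sup>2) ^ i) ?m)"
  proof -
    have "coact_r s ?w False True = 0"
      by (rule coact_r_FT_bd_word) (auto simp: pbw_word_def set_replicate_conv_if)
    moreover have "s powi (- col_weight ?w) = s ^ i * s ^ j"
      using s_nonzero by (simp add: col_weight_pbw_word power_int_add ac_simps)
    ultimately have "psi_mul s ?w Gb = smul (s ^ i * s ^ j) (mon (Gb # ?w))"
      using s_nonzero by (simp add: psi_mul_b)
    then show ?thesis
      using cong_Iq_smul[OF Cons_b_pbw_word_d, of s "s ^ i * s ^ j" i j 0] by (simp add: smul_smul)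
  qed
  moreover have "1 - s ^ 3 * (s ^ i * s ^ j * (s\<^sup>2) ^ i) = 1 - s ^ (3 + 3 * i + j)"
  proof -
    have "(s\<^sup>2) ^ i = (s ^ i)\<^sup>2" "s ^ (3 + 3 * i + j) = s ^ 3 * (s ^ i) ^ 3 * s ^ j"
      by (simp_all add: power_add power_mult[symmetric] mult.commute power_mult_distrib[symmetric])
    then show ?thesis
      by (simp add: power2_eq_square power3_eq_cube algebra_simps)
  qed
  then have "1 - s ^ 3 * (s ^ i * s ^ j * (s\<^sup>2) ^ i) \<noteq> 0"
    using s_power_ne_one[of "3 + 3 * i + j"] by simp
  ultimately show ?thesis
    by (rule in_b1_image_from_b1_gen)
qed

lemma lmul_a_coact_r_pbw_d:
  "cong_Iq s (lmul_gen Ga (coact_r s (pbw_word Gd i j (Suc k)) False True))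
     (smul ((1 / s) ^ (i + j) * ((s ^ (4 * k + 4) - 1) / s ^ (k + 3)))
       (mon (Ga # replicate i Gd @ replicate j Gb @ Gd # replicate k Gc)))"
proof -
  let ?u = "replicate i Gd @ replicate j Gb"
  have "lmul_gen Ga (coact_r s (pbw_word Gd i j (Suc k)) False True)
      = smul ((1 / s) ^ (i + j)) (fmul (mon (Ga # ?u)) (coact_r s (replicate (Suc k) Gc) False True))"
    using coact_r_FT_bd_prefix[of ?u s "replicate (Suc k) Gc"]
    by (simp add: pbw_word_def set_replicate_conv_if lmul_gen_smul lmul_gen_fmul_mon)
  moreover have "cong_Iq s (fmul (mon (Ga # ?u)) (coact_r s (replicate (Suc k) Gc) False True))
      (smul ((s ^ (4 * k + 4) - 1) / s ^ (k + 3)) (mon (Ga # ?u @ Gd # replicate k Gc)))"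
    using cong_Iq_fmul_mon_left[OF coact_r_FT_replicate_c[OF s_nonzero], of "Ga # ?u" k]
    by (simp add: fmul_smul_right fmul_mon_mon)
  ultimately show ?thesis
    by (metis cong_Iq_smul smul_smul append_assoc)
qed

lemma pbw_d_b_c_in_b1_image:
  assumes "mon (pbw_word Gd i j k) \<in> b1_image s \<sigma>"
  shows "mon (pbw_word Gd i (Suc j) (Suc k)) \<in> b1_image s \<sigma>"
proof -
  let ?w = "pbw_word Gd i j (Suc k)" and ?m = "mon (pbw_word Gd i (Suc j) (Suc k))"
    and ?X = "mon (pbw_word Gd i j k)" and ?g = "(1 / s) ^ (i + j) * ((s ^ (4 * k + 4) - 1) / s ^ (k + 3))"
  let ?A = "(s\<^sup>2) ^ j * (s\<^sup>2 * ((s\<^sup>2) ^ i * (s\<^sup>2) ^ i))" and ?c = "s ^ i * s ^ j / s ^ Suc k"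
  have "cong_Iq s (mon (?w @ [Gb])) (smul 1 ?m + smul 0 ?X)"
    using pbw_word_snoc_b by simp
  moreover have "cong_Iq s (psi_mul s ?w Gb)
      (smul (?g * ?A + ?c * (s\<^sup>2) ^ i) ?m + smul (?g * (s\<^sup>2) ^ j) ?X)"
  proof -
    have "s powi (- col_weight ?w) = ?c"
      using s_nonzero by (simp add: col_weight_pbw_word power_int_add power_int_diff ac_simps)
    then have "psi_mul s ?w Gb = lmul_gen Ga (coact_r s ?w False True) + smul ?c (mon (Gb # ?w))"
      using s_nonzero by (simp add: psi_mul_b)
    moreover have "cong_Iq s (lmul_gen Ga (coact_r s ?w False True) + smul ?c (mon (Gb # ?w)))
        (smul ?g (smul ?A ?m + smul ((s\<^sup>2) ^ j) ?X) + smul ?c (smul ((s\<^sup>2) ^ i) ?m))"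
      using cong_Iq_trans[OF lmul_a_coact_r_pbw_d cong_Iq_smul[OF reorder_a_d_b_d_c]]
        cong_Iq_smul[OF Cons_b_pbw_word_d]
      by (rule cong_Iq_add)
    moreover have "smul ?g (smul ?A ?m + smul ((s\<^sup>2) ^ j) ?X) + smul ?c (smul ((s\<^sup>2) ^ i) ?m)
        = smul (?g * ?A + ?c * (s\<^sup>2) ^ i) ?m + smul (?g * (s\<^sup>2) ^ j) ?X"
      by (simp add: smul_def fun_eq_iff algebra_simps)
    ultimately show ?thesis
      by simp
  qed
  moreover have "1 - s ^ 3 * (?g * ?A + ?c * (s\<^sup>2) ^ i) = 1 - s ^ (6 + 3 * i + j + 3 * k)"
  proof -
    have "s ^ (4 * k + 4) = (s ^ k) ^ 4 * s ^ 4" "(s\<^sup>2) ^ j = (s ^ j)\<^sup>2" "(s\<^sup>2) ^ i = (s ^ i)\<^sup>2"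
      "s ^ (6 + 3 * i + j + 3 * k) = s ^ 6 * (s ^ i) ^ 3 * s ^ j * (s ^ k) ^ 3"
      by (simp_all add: power_add power_mult[symmetric] mult.commute power_mult_distrib[symmetric])
    then show ?thesis
      using s_nonzero by (simp add: field_simps power_add)
        (simp add: algebra_simps power2_eq_square power3_eq_cube power4_eq_xxxx eval_nat_numeral)
  qed
  then have "1 - s ^ 3 * (?g * ?A + ?c * (s\<^sup>2) ^ i) \<noteq> 0"
    using s_power_ne_one[of "6 + 3 * i + j + 3 * k"] by simp
  ultimately show ?thesis
    using assms by (rule in_b1_image_from_b1_gen_plus)
qed

lemma pbw_d_word_in_b1_image: "mon (pbw_word Gd i j k) \<in> b1_image s \<sigma>"
proof (induction k arbitrary: j)
  case 0
  show ?case
  proof (cases j)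
    case 0
    then show ?thesis
      using one_in_b1_image pbw_d_in_b1_image by (cases i) (simp_all add: pbw_word_def)
  next
    case (Suc j')
    then show ?thesis using pbw_d_b_in_b1_image by simp
  qed
next
  case (Suc k)
  then show ?case
    using pbw_d_c_in_b1_image pbw_d_b_c_in_b1_image by (cases j) simp_all
qed

lemma pbw_word_in_b1_image:
  assumes "x \<in> {Ga, Gd}"
  shows "mon (pbw_word x i j k) \<in> b1_image s \<sigma>"
proof (cases i)
  case 0
  then have "pbw_word x i j k = pbw_word Gd 0 j k"
    by (simp add: pbw_word_def)
  then show ?thesis
    using pbw_d_word_in_b1_image by simp
next
  case (Suc i')
  then show ?thesis
    using assms pbw_d_word_in_b1_image pbw_a_in_b1_image by auto
qed

lemma FA_subset_b1_image:
  assumes "h \<in> FA"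
  shows "h \<in> b1_image s \<sigma>"
proof -
  have "mon w \<in> b1_image s \<sigma>" for w
    using pbw_span_subset_b1_image pbw_word_in_b1_image mon_in_pbw_span[OF s_nonzero] by blast
  then have "(\<Sum>w\<in>{w. h w \<noteq> 0}. smul (h w) (mon w)) \<in> b1_image s \<sigma>"
    by (intro b1_image_sum b1_image_smul)
  then show ?thesis
    unfolding FA_mon_expansion[OF assms, symmetric] .
qed

end

theorem mainTheorem11:
  fixes s :: complex and \<sigma> :: "fa \<Rightarrow> fa"
  assumes "s \<noteq> 0"
    and "\<forall>n::nat. n > 0 \<longrightarrow> (s\<^sup>2) ^ n \<noteq> 1"
    and "is_ribbon_plus s \<sigma>"
  shows "\<forall>h\<in>FA. \<exists>(n::nat) fs gs. (\<forall>i<n. fs i \<in> FA \<and> gs i \<in> FA)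
           \<and> h - (\<Sum>i<n. b1 s \<sigma> (fs i) (gs i)) \<in> Iq s"
proof -
  interpret generic_ribbon s \<sigma>
    using assms unfolding is_ribbon_plus_def by unfold_locales blast+
  show ?thesis
    using FA_subset_b1_image unfolding b1_image_def by blast
qed

end
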